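(* Let $n\geq 3$. For $k\in\mathbb{N}$ let $\mathbb{D}_k:=\{2^{-j}:0\leq j\leq k\}$ and $$\mathscr{R}_k:=\Big\{[0,s_1]\times\cdots\times[0,s_{n-2}]\times\Big[0,\frac{2^{-(n-1)k}}{s_1\cdots s_{n-2}}\Big]: s_1,\dots,s_{n-2}\in\mathbb{D}_k\Big\}$$ (rectangles in $\mathbb{R}^{n-1}$), let $\mathscr{R}:=\bigcup_{k\in\mathbb{N}}\mathscr{R}_k$ and $\tilde{\mathscr{R}}:=\{R\times[0,1]:R\in\mathscr{R}\}$ (rectangles in $\mathbb{R}^n$). Then the projections of the rectangles of $\tilde{\mathscr{R}}$ onto the $x_{n-1}x_n$ coordinate plane form a family of finite width, and for every Orlicz function $\Phi$ with $\Phi=o(\Phi_{n-2})$ at $\infty$, $M_{\tilde{\mathscr{R}}}$ does not satisfy a weak $L^\Phi$ inequality.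
   Context: A family of rectangles has finite width if it is a finite union of subfamilies each totally ordered by inclusion. For measurable $f$, $M_{\tilde{\mathscr{R}}}f(x):=\sup\{\frac{1}{|R|}\int_{\tau(R)}|f|: R\in\tilde{\mathscr{R}},\ \tau\text{ a translation},\ x\in\tau(R)\}$, $|\cdot|$ being Lebesgue measure. An Orlicz function is a convex increasing $\Phi:[0,\infty)\to[0,\infty)$ with $\Phi(0)=0$; $M_{\tilde{\mathscr{R}}}$ satisfies a weak $L^\Phi$ inequality if there is $C>0$ with $|\{M_{\tilde{\mathscr{R}}}f>\lambda\}|\leq\int_{\mathbb{R}^n}\Phi(C|f|/\lambda)$ for all $\lambda>0$ and all measurable $f$ with $\Phi(|f|)\in L^1$. $\Phi_d(t):=t(1+\log_+^dt)$, $\log_+t=\max(\log t,0)$. *)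

theory Defs
  imports "HOL-Analysis.Analysis" "HOL-Library.Landau_Symbols"
begin

definition finite_width :: "'a set set \<Rightarrow> bool" where
  "finite_width F \<longleftrightarrow> (\<exists>C. finite C \<and> \<Union>C = F \<and>
      (\<forall>G\<in>C. \<forall>A\<in>G. \<forall>B\<in>G. A \<subseteq> B \<or> B \<subseteq> A))"

definition max_op :: "'a::euclidean_space set set \<Rightarrow> ('a \<Rightarrow> real) \<Rightarrow> 'a \<Rightarrow> ennreal" where
  "max_op F f x = (SUP p \<in> {(R, a). R \<in> F \<and> x \<in> (\<lambda>y. a + y) ` R}.
      (\<integral>\<^sup>+ y. ennreal \<bar>f y\<bar> * indicator ((\<lambda>y. snd p + y) ` fst p) y \<partial>lebesgue)
        / emeasure lebesgue (fst p))"

definition orlicz :: "(real \<Rightarrow> real) \<Rightarrow> bool" where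
  "orlicz \<Phi> \<longleftrightarrow> convex_on {0..} \<Phi> \<and> mono_on {0..} \<Phi> \<and> \<Phi> 0 = 0 \<and> (\<forall>t\<ge>0. \<Phi> t \<ge> 0)"

definition weak_orlicz :: "'a::euclidean_space set set \<Rightarrow> (real \<Rightarrow> real) \<Rightarrow> bool" where
  "weak_orlicz F \<Phi> \<longleftrightarrow> (\<exists>C>0. \<forall>lam>0. \<forall>f. f \<in> borel_measurable lebesgue \<and>
      integrable lebesgue (\<lambda>x. \<Phi> \<bar>f x\<bar>) \<longrightarrow>
      outer_measure_of lebesgue {x. max_op F f x > ennreal lam}
        \<le> (\<integral>\<^sup>+ x. ennreal (\<Phi> (C * \<bar>f x\<bar> / lam)) \<partial>lebesgue))"

definition log_plus :: "real \<Rightarrow> real" where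
  "log_plus t = max (ln t) 0"

definition Phi_d :: "nat \<Rightarrow> real \<Rightarrow> real" where
  "Phi_d d t = t * (1 + log_plus t ^ d)"

definition dyadics :: "nat \<Rightarrow> real set" where
  "dyadics k = {(1/2) ^ j | j. j \<le> k}"

text \<open>Points of R^n, n = CARD('m) + 2, are written (u, v, w) with u the first n-2
  coordinates, v = x_{n-1}, w = x_n. The rectangle R x [0,1] for R in R_k with sides s.\<close>
definition rect_tilde :: "nat \<Rightarrow> real^'m \<Rightarrow> ((real^'m) \<times> real \<times> real) set" where
  "rect_tilde k s = {(u, v, w). (\<forall>i. 0 \<le> u $ i \<and> u $ i \<le> s $ i) \<and>
      0 \<le> v \<and> v \<le> (1/2) ^ ((CARD('m) + 1) * k) / (\<Prod>i\<in>UNIV. s $ i) \<and>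
      0 \<le> w \<and> w \<le> 1}"

definition R_tilde :: "((real^'m) \<times> real \<times> real) set set" where
  "R_tilde = (\<Union>k. {rect_tilde k s | s. \<forall>i. s $ i \<in> dyadics k})"

definition proj_last2 :: "((real^'m) \<times> real \<times> real) \<Rightarrow> real \<times> real" where
  "proj_last2 x = snd x"

end

theory Submission
  imports Defs
begin

text \<open>Let \<open>m = n - 2\<close> and fix \<open>K\<close>. Each of the \<open>(K+1)^m\<close> rectangles
  \<open>R \<times> [0,1]\<close> with \<open>R \<in> R_K\<close> has volume \<open>2^-(m+1)K\<close> and contains the corner box
  \<open>B = [0,2^-K]^m \<times> [0,2^-(m+1)K] \<times> [0,1]\<close>, so for \<open>f = 2^(mK+1) 1_B\<close> the maximal
  function exceeds \<open>1\<close> on all of them. Their union contains the disjoint shells on which every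
  \<open>x_i\<close> lies in \<open>(s_i/2, s_i)\<close>, of total volume \<open>(K+1)^m 2^-m 2^-(m+1)K\<close>, whereas
  \<open>\<integral> \<Phi>(C f) = \<Phi>(2C 2^mK) |B|\<close>. A weak \<open>L^\<Phi>\<close> inequality thus forces
  \<open>(K+1)^m 2^mK \<le> 2^m \<Phi>(2C 2^mK)\<close> for every \<open>K\<close>: along \<open>t = 2C 2^mK\<close> the function
  \<open>\<Phi>(t)\<close> is at least of order \<open>t log^m t\<close>, contradicting \<open>\<Phi> = o(\<Phi>_m)\<close>. The
  projections to the \<open>x_(n-1) x_n\<close> plane are the rectangles \<open>[0,a] \<times> [0,1]\<close>, a chain.\<close>

lemma emeasure_cbox_cart:
  assumes "\<forall>i. a $ i \<le> b $ i"
  shows "emeasure lborel (cbox a (b :: real^'m)) = ennreal (\<Prod>i\<in>UNIV. b $ i - a $ i)"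
proof -
  have "a \<in> cbox a b" using assms by (simp add: mem_box_cart)
  then have "cbox a b \<noteq> {}" by blast
  moreover have "emeasure lborel (cbox a b) = ennreal (measure lborel (cbox a b))"
    using emeasure_lborel_cbox_finite[of a b] by (intro emeasure_eq_ennreal_measure) auto
  ultimately show ?thesis by (simp add: content_cbox_cart)
qed

lemma emeasure_box_cart:
  "\<forall>i. a $ i \<le> b $ i \<Longrightarrow> emeasure lborel (box a (b :: real^'m)) = ennreal (\<Prod>i\<in>UNIV. b $ i - a $ i)"
  using emeasure_cbox_cart[of a b] by (simp add: emeasure_lborel_box_eq emeasure_lborel_cbox_eq)

lemma emeasure_lebesgue_Times3:
  fixes A :: "('a :: euclidean_space) set" and B :: "('b :: euclidean_space) set"
    and D :: "('c :: euclidean_space) set"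
  assumes "A \<in> sets lborel" "B \<in> sets lborel" "D \<in> sets lborel"
  shows "emeasure lebesgue (A \<times> B \<times> D) = emeasure lborel A * emeasure lborel B * emeasure lborel D"
proof -
  have BD: "B \<times> D \<in> sets lborel" using assms by (metis lborel_prod pair_measureI)
  then have "A \<times> B \<times> D \<in> sets lborel" using assms by (metis lborel_prod pair_measureI)
  then have "emeasure lebesgue (A \<times> B \<times> D) = emeasure (lborel \<Otimes>\<^sub>M lborel) (A \<times> (B \<times> D))"
    by (simp add: lborel_prod)
  also have "\<dots> = emeasure lborel A * emeasure lborel (B \<times> D)"
    using assms BD by (intro lborel.emeasure_pair_measure_Times) simp_all
  also have "emeasure lborel (B \<times> D) = emeasure (lborel \<Otimes>\<^sub>M lborel) (B \<times> D)"
    by (simp add: lborel_prod)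
  also have "\<dots> = emeasure lborel B * emeasure lborel D"
    using assms by (intro lborel.emeasure_pair_measure_Times) simp_all
  finally show ?thesis by (simp add: mult.assoc)
qed

lemma rect_tilde_eq_Times:
  "rect_tilde k (s :: real^'m) =
     cbox 0 s \<times> {0 .. (1/2) ^ ((CARD('m) + 1) * k) / (\<Prod>i\<in>UNIV. s $ i)} \<times> {0..1}"
  by (auto simp: rect_tilde_def mem_box_cart)

lemma emeasure_rect_tilde:
  assumes "\<forall>i. (s :: real^'m) $ i > 0"
  shows "emeasure lebesgue (rect_tilde k s) = ennreal ((1/2) ^ ((CARD('m) + 1) * k))"
proof -
  have "(\<Prod>i\<in>UNIV. s $ i) > 0" "\<And>i. s $ i \<noteq> 0"
    using assms by (auto simp: prod_pos dest: less_imp_neq[symmetric])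
  then show ?thesis
    unfolding rect_tilde_eq_Times using assms
    by (subst emeasure_lebesgue_Times3)
      (auto simp: emeasure_cbox_cart less_imp_le ennreal_mult''[symmetric])
qed

definition dyadic_vec :: "('m \<Rightarrow> nat) \<Rightarrow> real^'m" where
  "dyadic_vec j = (\<chi> i. (1/2) ^ j i)"

definition corner_box :: "nat \<Rightarrow> ((real^'m) \<times> real \<times> real) set" where
  "corner_box K = cbox 0 (\<chi> i. (1/2) ^ K) \<times> {0 .. (1/2) ^ ((CARD('m) + 1) * K)} \<times> {0..1}"

definition dyadic_shell :: "nat \<Rightarrow> ('m \<Rightarrow> nat) \<Rightarrow> ((real^'m) \<times> real \<times> real) set" where
  "dyadic_shell K j = box (\<chi> i. (1/2) ^ (j i + 1)) (dyadic_vec j)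
     \<times> {0 <..< (1/2) ^ ((CARD('m) + 1) * K) / (\<Prod>i\<in>UNIV. dyadic_vec j $ i)} \<times> {0<..<1}"

lemma dyadic_vec_pos: "dyadic_vec j $ i > 0"
  by (simp add: dyadic_vec_def)

lemma prod_dyadic_vec_bounds:
  "(\<Prod>i\<in>UNIV. dyadic_vec j $ i) > 0" "(\<Prod>i\<in>UNIV. dyadic_vec j $ i) \<le> 1"
  by (auto simp: dyadic_vec_def prod_pos intro!: prod_le_1 power_le_one)

lemma rect_tilde_dyadic_vec_in_R_tilde:
  assumes "\<forall>i. j i \<le> K"
  shows "rect_tilde K (dyadic_vec j) \<in> (R_tilde :: ((real^'m) \<times> real \<times> real) set set)"
proof -
  have "\<forall>i. dyadic_vec j $ i \<in> dyadics K"
    using assms by (auto simp: dyadic_vec_def dyadics_def)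
  then show ?thesis unfolding R_tilde_def by blast
qed

lemma corner_box_subset_rect_tilde:
  assumes "\<forall>i. j i \<le> K"
  shows "corner_box K \<subseteq> rect_tilde K (dyadic_vec j :: real^'m)"
proof -
  have le: "(1/2 :: real) ^ K \<le> (1/2) ^ j i" for i
    using assms by (intro power_decreasing) auto
  then have "cbox 0 (\<chi> i. (1/2 :: real) ^ K) \<subseteq> cbox 0 (dyadic_vec j :: real^'m)"
    by (auto simp: mem_box_cart dyadic_vec_def) (meson le order_trans)
  moreover have "(1/2 :: real) ^ ((CARD('m) + 1) * K)
      \<le> (1/2) ^ ((CARD('m) + 1) * K) / (\<Prod>i\<in>UNIV. dyadic_vec j $ i)"
    using prod_dyadic_vec_bounds[of j] by (simp add: le_divide_eq mult_le_cancel_left1)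
  ultimately show ?thesis
    unfolding rect_tilde_eq_Times corner_box_def by auto
qed

lemma dyadic_shell_subset_rect_tilde:
  "dyadic_shell K j \<subseteq> rect_tilde K (dyadic_vec j :: real^'m)"
proof -
  have "box (\<chi> i. (1/2 :: real) ^ (j i + 1)) (dyadic_vec j) \<subseteq> cbox 0 (dyadic_vec j :: real^'m)"
  proof
    fix x :: "real^'m"
    assume x: "x \<in> box (\<chi> i. (1/2) ^ (j i + 1)) (dyadic_vec j)"
    have "0 \<le> x $ i \<and> x $ i \<le> dyadic_vec j $ i" for i
    proof -
      have "(1/2) ^ (j i + 1) < x $ i" "x $ i < dyadic_vec j $ i"
        using x by (auto simp: mem_box_cart)
      moreover have "(0 :: real) < (1/2) ^ (j i + 1)" by simp
      ultimately show ?thesis by linarith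
    qed
    then show "x \<in> cbox 0 (dyadic_vec j)" by (simp add: mem_box_cart)
  qed
  then show ?thesis
    unfolding rect_tilde_eq_Times dyadic_shell_def by auto
qed

lemma corner_box_sets: "corner_box K \<in> sets lebesgue"
  unfolding corner_box_def
  by (intro sets_completionI_sets, unfold sets_lborel)
    (intro borel_closed closed_Times closed_cbox closed_atLeastAtMost)

lemma dyadic_shell_sets: "dyadic_shell K j \<in> sets lebesgue"
  unfolding dyadic_shell_def
  by (intro sets_completionI_sets, unfold sets_lborel)
    (intro borel_open open_Times open_box open_greaterThanLessThan)

lemma emeasure_corner_box:
  "emeasure lebesgue (corner_box K :: ((real^'m) \<times> real \<times> real) set)
     = ennreal (((1/2) ^ K) ^ CARD('m) * (1/2) ^ ((CARD('m) + 1) * K))"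
  unfolding corner_box_def
  by (subst emeasure_lebesgue_Times3) (auto simp: emeasure_cbox_cart ennreal_mult''[symmetric])

lemma emeasure_dyadic_shell:
  "emeasure lebesgue (dyadic_shell K j :: ((real^'m) \<times> real \<times> real) set)
     = ennreal ((1/2) ^ ((CARD('m) + 1) * K) / 2 ^ CARD('m))"
proof -
  let ?P = "\<Prod>i\<in>UNIV. dyadic_vec j $ i"
  have "(\<Prod>i\<in>UNIV. dyadic_vec j $ i - (\<chi> i. (1/2) ^ (j i + 1)) $ i) = ?P / 2 ^ CARD('m)"
    by (simp add: dyadic_vec_def prod_dividef)
  then show ?thesis
    unfolding dyadic_shell_def using prod_dyadic_vec_bounds[of j]
    by (subst emeasure_lebesgue_Times3)
      (auto simp: emeasure_box_cart dyadic_vec_def ennreal_mult''[symmetric])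
qed

lemma dyadic_exponent_unique:
  assumes "(1/2 :: real) ^ (a + 1) < x" "x < (1/2) ^ a" "(1/2) ^ (b + 1) < x" "x < (1/2) ^ b"
  shows "a = b"
proof (rule ccontr)
  assume "a \<noteq> b"
  then consider "a + 1 \<le> b" | "b + 1 \<le> a" by linarith
  then show False
  proof cases
    case 1
    then have "(1/2 :: real) ^ b \<le> (1/2) ^ (a + 1)" by (rule power_decreasing) auto
    then show False using assms by linarith
  next
    case 2
    then have "(1/2 :: real) ^ a \<le> (1/2) ^ (b + 1)" by (rule power_decreasing) auto
    then show False using assms by linarith
  qed
qed

lemma disjoint_family_dyadic_shell:
  "disjoint_family (dyadic_shell K :: ('m \<Rightarrow> nat) \<Rightarrow> ((real^'m) \<times> real \<times> real) set)"
  unfolding disjoint_family_on_def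
proof (intro ballI impI)
  fix j j' :: "'m \<Rightarrow> nat"
  assume "j \<noteq> j'"
  then obtain i where "j i \<noteq> j' i" by auto
  moreover have "j i = j' i" if "(u, v, w) \<in> dyadic_shell K j \<inter> dyadic_shell K j'" for u v w
    using that by (intro dyadic_exponent_unique[of _ "u $ i"]) (auto simp: dyadic_shell_def mem_box_cart dyadic_vec_def)
  ultimately show "dyadic_shell K j \<inter> dyadic_shell K j' = {}" by fast
qed

lemma emeasure_Union_dyadic_shell:
  "emeasure lebesgue (\<Union>j \<in> UNIV \<rightarrow>\<^sub>E {..K}. dyadic_shell K j :: ((real^'m) \<times> real \<times> real) set)
     = ennreal (real (K + 1) ^ CARD('m) * ((1/2) ^ ((CARD('m) + 1) * K) / 2 ^ CARD('m)))"
proof -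
  have "emeasure lebesgue (\<Union>j \<in> UNIV \<rightarrow>\<^sub>E {..K}. dyadic_shell K j :: ((real^'m) \<times> real \<times> real) set)
      = (\<Sum>j \<in> (UNIV :: 'm set) \<rightarrow>\<^sub>E {..K}. emeasure lebesgue (dyadic_shell K j))"
    by (rule sum_emeasure[of "dyadic_shell K", symmetric])
      (auto simp: dyadic_shell_sets finite_PiE
        intro: disjoint_family_on_mono[OF subset_UNIV disjoint_family_dyadic_shell])
  also have "\<dots> = of_nat (card ((UNIV :: 'm set) \<rightarrow>\<^sub>E {..K}))
      * ennreal ((1/2) ^ ((CARD('m) + 1) * K) / 2 ^ CARD('m))"
    by (simp add: emeasure_dyadic_shell)
  finally show ?thesis
    by (simp add: card_PiE ennreal_of_nat_eq_real_of_nat flip: ennreal_mult)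
qed

lemma max_op_ge_average:
  assumes "R \<in> F" "x \<in> R"
  shows "(\<integral>\<^sup>+ y. ennreal \<bar>f y\<bar> * indicator R y \<partial>lebesgue) / emeasure lebesgue R \<le> max_op F f x"
proof -
  have "(R, 0) \<in> {(R, a). R \<in> F \<and> x \<in> (\<lambda>y. a + y) ` R}" using assms by simp
  then show ?thesis unfolding max_op_def by (rule SUP_upper2) simp
qed

lemma max_op_corner_box:
  assumes "\<forall>i. j i \<le> K" "x \<in> rect_tilde K (dyadic_vec j)" "N \<ge> 0"
  shows "ennreal (N * ((1/2) ^ K) ^ CARD('m))
           \<le> max_op (R_tilde :: ((real^'m) \<times> real \<times> real) set set) (\<lambda>y. N * indicator (corner_box K) y) x"
proof -
  define V :: real where "V = (1/2) ^ ((CARD('m) + 1) * K)"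
  let ?R = "rect_tilde K (dyadic_vec j :: real^'m)"
  let ?B = "corner_box K :: ((real^'m) \<times> real \<times> real) set"
  have "(\<integral>\<^sup>+ y. ennreal \<bar>N * indicator ?B y\<bar> * indicator ?R y \<partial>lebesgue)
      = (\<integral>\<^sup>+ y. ennreal N * indicator ?B y \<partial>lebesgue)"
    by (intro nn_integral_cong)
      (use corner_box_subset_rect_tilde[OF assms(1)] assms(3) in \<open>auto simp: indicator_def\<close>)
  also have "\<dots> = ennreal N * emeasure lebesgue ?B"
    by (rule nn_integral_cmult_indicator[OF corner_box_sets])
  also have "\<dots> = ennreal (N * ((1/2) ^ K) ^ CARD('m) * V)"
    using assms(3) by (simp add: emeasure_corner_box V_def mult.assoc flip: ennreal_mult'')
  finally have "ennreal (N * ((1/2) ^ K) ^ CARD('m))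
      = (\<integral>\<^sup>+ y. ennreal \<bar>N * indicator ?B y\<bar> * indicator ?R y \<partial>lebesgue)
          / emeasure lebesgue ?R"
    using assms(3) by (simp add: emeasure_rect_tilde dyadic_vec_pos V_def divide_ennreal)
  also have "\<dots> \<le> max_op R_tilde (\<lambda>y. N * indicator ?B y) x"
    using rect_tilde_dyadic_vec_in_R_tilde[OF assms(1)] assms(2) by (rule max_op_ge_average)
  finally show ?thesis .
qed

lemma dyadic_shells_subset_level_set:
  "(\<Union>j \<in> UNIV \<rightarrow>\<^sub>E {..K}. dyadic_shell K j) \<subseteq>
     {x. max_op (R_tilde :: ((real^'m) \<times> real \<times> real) set set)
           (\<lambda>y. 2 * 2 ^ (CARD('m) * K) * indicator (corner_box K) y) x > 1}"
proof clarify
  fix x and j :: "'m \<Rightarrow> nat" assume "j \<in> UNIV \<rightarrow>\<^sub>E {..K}" "x \<in> dyadic_shell K j"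
  then have "ennreal (2 * 2 ^ (CARD('m) * K) * ((1/2) ^ K) ^ CARD('m))
      \<le> max_op (R_tilde :: ((real^'m) \<times> real \<times> real) set set)
           (\<lambda>y. 2 * 2 ^ (CARD('m) * K) * indicator (corner_box K) y) x"
    using dyadic_shell_subset_rect_tilde by (intro max_op_corner_box[of j]) auto
  moreover have "(2 :: real) * 2 ^ (CARD('m) * K) * ((1/2) ^ K) ^ CARD('m) = 2"
    by (simp add: power_mult[symmetric] mult.commute power_one_over)
  ultimately have "2 \<le> max_op R_tilde (\<lambda>y. 2 * 2 ^ (CARD('m) * K) * indicator (corner_box K) y) x"
    by simp
  then show "1 < max_op R_tilde (\<lambda>y. 2 * 2 ^ (CARD('m) * K) * indicator (corner_box K) y) x"
    by (rule less_le_trans[rotated]) simp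
qed

lemma nn_integral_Phi_indicator:
  fixes \<Phi> :: "real \<Rightarrow> real" and C N :: real and A :: "'a :: euclidean_space set"
  assumes "\<Phi> 0 = 0" "\<Phi> (C * N) \<ge> 0" "N \<ge> 0" "A \<in> sets lebesgue"
  shows "(\<integral>\<^sup>+ x. ennreal (\<Phi> (C * \<bar>N * indicator A x\<bar>)) \<partial>lebesgue)
           = ennreal (\<Phi> (C * N)) * emeasure lebesgue A"
proof -
  have "(\<integral>\<^sup>+ x. ennreal (\<Phi> (C * \<bar>N * indicator A x\<bar>)) \<partial>lebesgue)
      = (\<integral>\<^sup>+ x. ennreal (\<Phi> (C * N)) * indicator A x \<partial>lebesgue)"
    using assms(1,3) by (intro nn_integral_cong) (auto simp: indicator_def)
  also have "\<dots> = ennreal (\<Phi> (C * N)) * emeasure lebesgue A"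
    using assms(4) by (rule nn_integral_cmult_indicator)
  finally show ?thesis .
qed

lemma integrable_Phi_indicator:
  fixes \<Phi> :: "real \<Rightarrow> real" and N :: real and A :: "'a :: euclidean_space set"
  assumes "\<Phi> 0 = 0" "N \<ge> 0" "A \<in> sets lebesgue" "emeasure lebesgue A < \<infinity>"
  shows "integrable lebesgue (\<lambda>x. \<Phi> \<bar>N * indicator A x\<bar>)"
proof -
  have "(\<lambda>x. \<Phi> \<bar>N * indicator A x\<bar>) = (\<lambda>x. \<Phi> N * indicator A x)"
    using assms(1,2) by (auto simp: indicator_def)
  moreover have "integrable lebesgue (indicator A :: _ \<Rightarrow> real)"
    using assms(3,4) by (rule integrable_real_indicator)
  ultimately show ?thesis by simp
qed

lemma weak_orlicz_R_tilde_dyadic_bound: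
  assumes "weak_orlicz (R_tilde :: ((real^'m) \<times> real \<times> real) set set) \<Phi>" "orlicz \<Phi>"
  obtains c where "c > 0"
    "\<And>K. real (K + 1) ^ CARD('m) * 2 ^ (CARD('m) * K) \<le> \<Phi> (c * 2 ^ (CARD('m) * K)) * 2 ^ CARD('m)"
proof -
  have \<Phi>0: "\<Phi> 0 = 0" and \<Phi>_nonneg: "\<And>t. t \<ge> 0 \<Longrightarrow> \<Phi> t \<ge> 0"
    using assms(2) unfolding orlicz_def by auto
  obtain C :: real where "C > 0" and weak: "\<And>lam f. lam > 0 \<Longrightarrow> f \<in> borel_measurable lebesgue \<Longrightarrow>
      integrable lebesgue (\<lambda>x. \<Phi> \<bar>f x\<bar>) \<Longrightarrow>
      outer_measure_of lebesgue {x. max_op (R_tilde :: ((real^'m) \<times> real \<times> real) set set) f x > ennreal lam}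
        \<le> (\<integral>\<^sup>+ x. ennreal (\<Phi> (C * \<bar>f x\<bar> / lam)) \<partial>lebesgue)"
    using assms(1) unfolding weak_orlicz_def by blast
  show thesis
  proof (rule that[of "2 * C"])
    fix K
    define m where "m = CARD('m)"
    define N :: real where "N = 2 * 2 ^ (m * K)"
    define V :: real where "V = (1/2) ^ ((m + 1) * K)"
    let ?B = "corner_box K :: ((real^'m) \<times> real \<times> real) set"
    have "N \<ge> 0" "V > 0" "\<Phi> (C * N) \<ge> 0"
      using \<open>C > 0\<close> by (simp_all add: N_def V_def \<Phi>_nonneg)
    have B: "emeasure lebesgue ?B = ennreal (((1/2) ^ K) ^ m * V)"
      by (simp add: emeasure_corner_box m_def V_def)
    have "?B \<in> sets lebesgue" by (rule corner_box_sets)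
    then have f_meas: "(\<lambda>y. N * indicator ?B y) \<in> borel_measurable lebesgue" by simp
    have "ennreal (real (K + 1) ^ m * (V / 2 ^ m))
        = outer_measure_of lebesgue (\<Union>j \<in> (UNIV :: 'm set) \<rightarrow>\<^sub>E {..K}. dyadic_shell K j)"
      by (simp add: emeasure_Union_dyadic_shell m_def V_def sets.finite_UN dyadic_shell_sets finite_PiE)
    also have "\<dots> \<le> outer_measure_of lebesgue {x. max_op R_tilde (\<lambda>y. N * indicator ?B y) x > 1}"
      unfolding N_def m_def by (rule outer_measure_of_mono[OF dyadic_shells_subset_level_set])
    also have "\<dots> \<le> (\<integral>\<^sup>+ x. ennreal (\<Phi> (C * \<bar>N * indicator ?B x\<bar> / 1)) \<partial>lebesgue)"
      using weak[of 1, OF _ f_meas integrable_Phi_indicator[of \<Phi> N, OF \<Phi>0 \<open>N \<ge> 0\<close> \<open>?B \<in> sets lebesgue\<close>]] B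
      by (simp add: \<open>?B \<in> sets lebesgue\<close>)
    also have "\<dots> = ennreal (\<Phi> (C * N)) * emeasure lebesgue ?B"
      unfolding div_by_1 using \<Phi>0 \<open>\<Phi> (C * N) \<ge> 0\<close> \<open>N \<ge> 0\<close> \<open>?B \<in> sets lebesgue\<close>
      by (rule nn_integral_Phi_indicator)
    also have "\<dots> = ennreal (\<Phi> (C * N) * (((1/2) ^ K) ^ m * V))"
      using \<open>\<Phi> (C * N) \<ge> 0\<close> B by (simp flip: ennreal_mult')
    finally have "real (K + 1) ^ m * (V / 2 ^ m) \<le> \<Phi> (C * N) * (((1/2) ^ K) ^ m * V)"
      using \<open>\<Phi> (C * N) \<ge> 0\<close> \<open>V > 0\<close> by simp
    then have "real (K + 1) ^ m * 2 ^ (m * K) \<le> \<Phi> (C * N) * 2 ^ m * (((1/2) ^ K) ^ m * 2 ^ (m * K))"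
      using \<open>V > 0\<close> by (simp add: field_simps)
    also have "((1/2 :: real) ^ K) ^ m * 2 ^ (m * K) = 1"
      by (simp add: power_mult[symmetric] mult.commute power_one_over)
    finally show "real (K + 1) ^ CARD('m) * 2 ^ (CARD('m) * K)
        \<le> \<Phi> (2 * C * 2 ^ (CARD('m) * K)) * 2 ^ CARD('m)"
      unfolding m_def N_def by (simp add: mult_ac)
  qed (use \<open>C > 0\<close> in simp)
qed

lemma Phi_d_along_dyadic_scales_bigo:
  fixes c :: real
  assumes "c > 0"
  shows "(\<lambda>K::nat. Phi_d m (c * 2 ^ (m * K))) \<in> O(\<lambda>K. 2 ^ (m * K) * real K ^ m)"
proof -
  define a where "a = \<bar>ln c\<bar> + real m"
  have "Phi_d m (c * 2 ^ (m * K)) \<le> c * (1 + a ^ m) * (2 ^ (m * K) * real K ^ m)"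
    if K: "K \<ge> 1" for K :: nat
  proof -
    have "ln (c * 2 ^ (m * K)) = ln c + real (m * K) * ln 2"
      using assms by (simp add: ln_mult ln_realpow)
    also have "\<dots> \<le> a * real K"
    proof -
      have "\<bar>ln c\<bar> \<le> \<bar>ln c\<bar> * real K"
        using K by (simp add: mult_le_cancel_left1)
      moreover have "real (m * K) * ln 2 \<le> real m * real K"
        using ln_2_less_1 by (simp add: mult_left_le)
      ultimately show ?thesis unfolding a_def by (simp add: distrib_right)
    qed
    finally have "log_plus (c * 2 ^ (m * K)) \<le> a * real K"
      unfolding log_plus_def a_def by simp
    then have "log_plus (c * 2 ^ (m * K)) ^ m \<le> a ^ m * real K ^ m"
      by (metis log_plus_def max.cobounded2 power_mono power_mult_distrib)
    moreover have "1 \<le> real K ^ m" using K by simp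
    ultimately have "1 + log_plus (c * 2 ^ (m * K)) ^ m \<le> (1 + a ^ m) * real K ^ m"
      by (simp add: distrib_right)
    then show ?thesis
      unfolding Phi_d_def using assms by (simp add: mult_left_mono mult_ac)
  qed
  moreover have "Phi_d m (c * 2 ^ (m * K)) \<ge> 0" for K :: nat
    unfolding Phi_d_def log_plus_def using assms by simp
  ultimately have "\<forall>\<^sub>F K in sequentially.
      norm (Phi_d m (c * 2 ^ (m * K))) \<le> c * (1 + a ^ m) * norm (2 ^ (m * K) * real K ^ m)"
    by (auto simp: eventually_sequentially)
  then show ?thesis
    by (rule landau_o.bigI[rotated]) (use assms in \<open>simp add: add_pos_nonneg a_def\<close>)
qed

lemma smallo_along_dyadic_scales:
  fixes \<Phi> :: "real \<Rightarrow> real" and c :: real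
  assumes "\<Phi> \<in> o[at_top](Phi_d m)" "m \<ge> 1" "c > 0"
  shows "(\<lambda>K::nat. \<Phi> (c * 2 ^ (m * K))) \<in> o(\<lambda>K. 2 ^ (m * K) * real K ^ m)"
proof -
  have "filterlim (\<lambda>K::nat. c * 2 ^ (m * K)) at_top sequentially"
  proof (rule filterlim_tendsto_pos_mult_at_top[OF tendsto_const \<open>c > 0\<close>])
    have "real K \<le> 2 ^ (m * K)" for K :: nat
    proof -
      have "(2 :: real) ^ K \<le> 2 ^ (m * K)"
        by (rule power_increasing) (use \<open>m \<ge> 1\<close> in auto)
      then show ?thesis using of_nat_less_two_power[of K, where 'a = real] by linarith
    qed
    then show "filterlim (\<lambda>K::nat. 2 ^ (m * K) :: real) at_top sequentially"
      by (intro filterlim_at_top_mono[OF filterlim_real_sequentially]) auto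
  qed
  from landau_o.small.compose[OF assms(1) this]
  show ?thesis
    using Phi_d_along_dyadic_scales_bigo[OF \<open>c > 0\<close>, of m] by (rule landau_o.small_big_trans)
qed

lemma dyadic_lower_bound_fails:
  fixes \<Phi> :: "real \<Rightarrow> real" and c :: real
  assumes "\<Phi> \<in> o[at_top](Phi_d m)" "m \<ge> 1" "c > 0"
  shows "\<not> (\<forall>K::nat. real (K + 1) ^ m * 2 ^ (m * K) \<le> \<Phi> (c * 2 ^ (m * K)) * 2 ^ m)"
proof -
  have "\<forall>\<^sub>F K in sequentially. norm (\<Phi> (c * 2 ^ (m * K))) \<le> (1 / 2 ^ (m + 1)) * norm (2 ^ (m * K) * real K ^ m)"
    by (rule landau_o.smallD[OF smallo_along_dyadic_scales[OF assms]]) simp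
  then obtain K :: nat where K: "\<bar>\<Phi> (c * 2 ^ (m * K))\<bar> \<le> 2 ^ (m * K) * real K ^ m / 2 ^ (m + 1)"
    by (auto simp: eventually_sequentially)
  have "\<Phi> (c * 2 ^ (m * K)) * 2 ^ m \<le> 2 ^ (m * K) * real K ^ m / 2"
    using order_trans[OF abs_ge_self K] by (simp add: field_simps)
  also have "\<dots> < real (K + 1) ^ m * 2 ^ (m * K)"
  proof -
    have "real K ^ m \<le> real (K + 1) ^ m" "0 < real (K + 1) ^ m"
      by (simp_all add: power_mono)
    then have "real K ^ m / 2 < real (K + 1) ^ m" by linarith
    then show ?thesis by (simp add: mult.commute)
  qed
  finally show ?thesis using not_le by blast
qed

lemma finite_width_chain:
  "\<forall>A\<in>F. \<forall>B\<in>F. A \<subseteq> B \<or> B \<subseteq> A \<Longrightarrow> finite_width F"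
  unfolding finite_width_def by (intro exI[of _ "{F}"]) auto

lemma dyadics_pos: "x \<in> dyadics k \<Longrightarrow> 0 < x"
  unfolding dyadics_def by auto

lemma proj_last2_rect_tilde:
  assumes "\<forall>i. 0 \<le> (s :: real^'m) $ i"
  shows "proj_last2 ` rect_tilde k s = {0 .. (1/2) ^ ((CARD('m) + 1) * k) / (\<Prod>i\<in>UNIV. s $ i)} \<times> {0..1}"
proof -
  have "0 \<in> cbox 0 s" using assms by (simp add: mem_box_cart)
  then have "cbox 0 s \<noteq> {}" by blast
  then show ?thesis
    unfolding rect_tilde_eq_Times proj_last2_def by simp
qed

lemma finite_width_proj_R_tilde:
  "finite_width ((\<lambda>R. proj_last2 ` R) ` (R_tilde :: ((real^'m) \<times> real \<times> real) set set))"
proof (rule finite_width_chain)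
  let ?F = "(\<lambda>R. proj_last2 ` R) ` (R_tilde :: ((real^'m) \<times> real \<times> real) set set)"
  have shape: "\<exists>a. P = {0..a} \<times> {0..1}" if P: "P \<in> ?F" for P
  proof -
    obtain k and s :: "real^'m" where "P = proj_last2 ` rect_tilde k s" "\<forall>i. s $ i \<in> dyadics k"
      using P unfolding R_tilde_def by blast
    moreover from this(2) have "\<forall>i. 0 \<le> s $ i"
      by (meson dyadics_pos less_imp_le)
    ultimately show ?thesis by (auto simp: proj_last2_rect_tilde)
  qed
  show "\<forall>A\<in>?F. \<forall>B\<in>?F. A \<subseteq> B \<or> B \<subseteq> A"
  proof (intro ballI)
    fix A B assume "A \<in> ?F" "B \<in> ?F"
    then obtain a b where "A = {0..a} \<times> {0..1}" "B = {0..b} \<times> {0..1}"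
      using shape by meson
    then show "A \<subseteq> B \<or> B \<subseteq> A" by (cases "a \<le> b") auto
  qed
qed

theorem mainTheorem8:
  shows "finite_width ((\<lambda>R. proj_last2 ` R) ` (R_tilde :: ((real^'m) \<times> real \<times> real) set set))
    \<and> (\<forall>\<Phi>. orlicz \<Phi> \<and> \<Phi> \<in> o[at_top](Phi_d CARD('m)) \<longrightarrow>
         \<not> weak_orlicz (R_tilde :: ((real^'m) \<times> real \<times> real) set set) \<Phi>)"
proof (intro conjI allI impI)
  show "finite_width ((\<lambda>R. proj_last2 ` R) ` (R_tilde :: ((real^'m) \<times> real \<times> real) set set))"
    by (rule finite_width_proj_R_tilde)
next
  fix \<Phi> :: "real \<Rightarrow> real"
  assume \<Phi>: "orlicz \<Phi> \<and> \<Phi> \<in> o[at_top](Phi_d CARD('m))"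
  show "\<not> weak_orlicz (R_tilde :: ((real^'m) \<times> real \<times> real) set set) \<Phi>"
  proof
    assume "weak_orlicz (R_tilde :: ((real^'m) \<times> real \<times> real) set set) \<Phi>"
    then obtain c where "c > 0" and bound:
      "\<And>K. real (K + 1) ^ CARD('m) * 2 ^ (CARD('m) * K) \<le> \<Phi> (c * 2 ^ (CARD('m) * K)) * 2 ^ CARD('m)"
      using \<Phi> weak_orlicz_R_tilde_dyadic_bound by metis
    moreover have "CARD('m) \<ge> 1" by (simp add: Suc_leI)
    ultimately show False using dyadic_lower_bound_fails \<Phi> by blast
  qed
qed

end
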